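(* Let $X$ be a compact Hausdorff space, $\mathcal{A}$ a unital $C^*$-algebra with unit $1$, $\mathcal{E}$ a $*$-subalgebra of $C(X,\mathcal{A})$ such that $1_X\in\bar{\mathcal{E}}$. Let $x\in X$ and $\delta>0$. Then for every selfadjoint $f\in\Delta_2(\mathcal{E})$ there are selfadjoint $g,h\in\bar{\mathcal{E}}$ with $g(x)=f(x)=h(x)$ and $g-\delta\cdot1_X\leq f\leq h+\delta\cdot1_X$.
   Context: $C(X,\mathcal{A})$: continuous maps $X\to\mathcal{A}$, pointwise operations, supremum norm; $1_X$ is the constant map equal to $1$; $\bar{\mathcal{E}}$ is the uniform closure of $\mathcal{E}$. $\Delta_2(\mathcal{E})$ is the set of all $u\in C(X,\mathcal{A})$ such that for all $x,y\in X$ and $\varepsilon>0$ there is $v\in\mathcal{E}$ with $\|v(z)-u(z)\|<\varepsilon$ for $z\in\{x,y\}$. For selfadjoint functions, $u\leq w$ means $u(z)\leq w(z)$ (i.e. $w(z)-u(z)$ nonnegative) for all $z\in X$. *)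

theory Defs
  imports "HOL-Analysis.Analysis"
begin

text \<open>The real structure comes from the
library class real_normed_algebra_1 + banach; complex scalars are added via
cscale, compatible with scaleR.\<close>

class cstar_algebra_1 = real_normed_algebra_1 + banach +
  fixes cscale :: "complex \<Rightarrow> 'a \<Rightarrow> 'a"
    and adj :: "'a \<Rightarrow> 'a"
  assumes cscale_of_real: "cscale (complex_of_real r) x = r *\<^sub>R x"
    and cscale_add_right: "cscale c (x + y) = cscale c x + cscale c y"
    and cscale_add_left: "cscale (c + d) x = cscale c x + cscale d x"
    and cscale_assoc: "cscale c (cscale d x) = cscale (c * d) x"
    and cscale_one: "cscale 1 x = x"
    and norm_cscale: "norm (cscale c x) = cmod c * norm x"
    and cscale_mult_left: "cscale c x * y = cscale c (x * y)"
    and cscale_mult_right: "x * cscale c y = cscale c (x * y)"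
    and adj_adj: "adj (adj x) = x"
    and adj_add: "adj (x + y) = adj x + adj y"
    and adj_cscale: "adj (cscale c x) = cscale (cnj c) (adj x)"
    and adj_mult: "adj (x * y) = adj y * adj x"
    and cstar_identity: "norm (adj x * x) = (norm x)\<^sup>2"

definition cinvertible :: "'a::cstar_algebra_1 \<Rightarrow> bool" where
  "cinvertible b \<longleftrightarrow> (\<exists>c. b * c = 1 \<and> c * b = 1)"

definition cspectrum :: "'a::cstar_algebra_1 \<Rightarrow> complex set" where
  "cspectrum a = {l. \<not> cinvertible (a - cscale l 1)}"

definition selfadjoint :: "'a::cstar_algebra_1 \<Rightarrow> bool" where
  "selfadjoint a \<longleftrightarrow> adj a = a"

definition nonneg :: "'a::cstar_algebra_1 \<Rightarrow> bool" where
  "nonneg a \<longleftrightarrow> selfadjoint a \<and> cspectrum a \<subseteq> {complex_of_real t | t. t \<ge> 0}"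

text \<open>Functions are of type 'x \<Rightarrow> 'a; only their values on topspace X matter.\<close>

definition CXA :: "'x topology \<Rightarrow> ('x \<Rightarrow> 'a::cstar_algebra_1) set" where
  "CXA X = {u. continuous_map X euclidean u}"

definition star_subalgebra :: "'x topology \<Rightarrow> ('x \<Rightarrow> 'a::cstar_algebra_1) set \<Rightarrow> bool" where
  "star_subalgebra X E \<longleftrightarrow> E \<subseteq> CXA X \<and> (\<lambda>z. 0) \<in> E \<and>
     (\<forall>u\<in>E. \<forall>v\<in>E. (\<lambda>z. u z + v z) \<in> E) \<and>
     (\<forall>c. \<forall>u\<in>E. (\<lambda>z. cscale c (u z)) \<in> E) \<and>
     (\<forall>u\<in>E. \<forall>v\<in>E. (\<lambda>z. u z * v z) \<in> E) \<and>
     (\<forall>u\<in>E. (\<lambda>z. adj (u z)) \<in> E)"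

definition uclosure :: "'x topology \<Rightarrow> ('x \<Rightarrow> 'a::cstar_algebra_1) set \<Rightarrow> ('x \<Rightarrow> 'a) set" where
  "uclosure X E = {u \<in> CXA X. \<forall>\<epsilon>>0. \<exists>v\<in>E. \<forall>z\<in>topspace X. norm (v z - u z) < \<epsilon>}"

definition Delta2 :: "'x topology \<Rightarrow> ('x \<Rightarrow> 'a::cstar_algebra_1) set \<Rightarrow> ('x \<Rightarrow> 'a) set" where
  "Delta2 X E = {u \<in> CXA X. \<forall>x\<in>topspace X. \<forall>y\<in>topspace X. \<forall>\<epsilon>>0.
      \<exists>v\<in>E. norm (v x - u x) < \<epsilon> \<and> norm (v y - u y) < \<epsilon>}"

definition sa_fun :: "'x topology \<Rightarrow> ('x \<Rightarrow> 'a::cstar_algebra_1) \<Rightarrow> bool" where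
  "sa_fun X u \<longleftrightarrow> (\<forall>z\<in>topspace X. selfadjoint (u z))"

definition fun_le :: "'x topology \<Rightarrow> ('x \<Rightarrow> 'a::cstar_algebra_1) \<Rightarrow> ('x \<Rightarrow> 'a) \<Rightarrow> bool" where
  "fun_le X u w \<longleftrightarrow> (\<forall>z\<in>topspace X. nonneg (w z - u z))"

end

theory Submission
  imports Defs "HOL-Computational_Algebra.Formal_Power_Series"
begin

text \<open>Nonnegativity is certified without functional calculus: a selfadjoint \<open>c\<close> with
  \<open>\<parallel>s - c\<parallel> \<le> s\<close> for some \<open>s \<ge> 0\<close> is nonnegative (Neumann series keep its spectrum in
  \<open>[0, \<infinity>)\<close>), this certificate is stable under sums, and squares of selfadjoint elements have
  it, via the binomial series for \<open>\<surd>(1 - y\<^sup>2)\<close>.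

  In the uniform closure \<open>Ebar\<close>, closed under uniformly convergent series, every selfadjoint
  \<open>b \<in> A\<close> approximable at \<open>x\<close> by \<open>E\<close> is \<open>u(x)\<close> for a selfadjoint \<open>u \<in> Ebar\<close> with
  \<open>\<parallel>u\<parallel> \<le> 4\<parallel>b\<parallel>\<close>: approximate, and replace the approximant \<open>d\<close> by \<open>d (1 + K d\<^sup>2)\<^sup>-\<^sup>1\<close>,
  which halves the error at \<open>x\<close> while staying bounded by \<open>2\<parallel>b\<parallel>\<close> everywhere; the corrections
  sum to \<open>u\<close>. Take such \<open>u\<close> with \<open>u(x) = f(x)\<close>. Correcting elements of \<open>E\<close> close to \<open>f\<close>
  at \<open>x\<close> and \<open>y\<close> in the same way gives selfadjoint \<open>W\<^sub>y \<in> Ebar\<close> with \<open>W\<^sub>y(x) = f(x)\<close>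
  and \<open>\<parallel>W\<^sub>y - f\<parallel> < 3\<delta>/4\<close> near \<open>y\<close>; finitely many of them suffice by compactness. With
  \<open>Q = \<Sum>\<^sub>y (W\<^sub>y - u)\<^sup>2\<close>, the functions \<open>u \<mp> Q/\<delta>\<close> work, because
  \<open>w\<^sup>2/\<delta> + \<delta> \<ge> \<plusminus>a\<close> whenever \<open>\<parallel>a - w\<parallel> \<le> 3\<delta>/4\<close> (complete the square).\<close>

declare cscale_of_real [simp]

lemma cscale_zero_left [simp]: "cscale 0 (x::'a::cstar_algebra_1) = 0"
  using cscale_of_real[of 0 x] by simp

lemma cscale_add_cscale_minus: "cscale c x + cscale (- c) (x::'a::cstar_algebra_1) = 0"
  by (metis add.right_inverse cscale_add_left cscale_zero_left)

lemma cscale_minus_left: "cscale (- c) (x::'a::cstar_algebra_1) = - cscale c x"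
  by (metis add_eq_0_iff cscale_add_cscale_minus)

lemma cscale_diff_right: "cscale c (x - y::'a::cstar_algebra_1) = cscale c x - cscale c y"
  by (metis add_diff_cancel cscale_add_right diff_add_cancel)

lemma cscale_mult_cscale: "cscale a (x::'a::cstar_algebra_1) * cscale b y = cscale (a * b) (x * y)"
  by (simp add: cscale_mult_left cscale_mult_right cscale_assoc mult.commute)

lemma adj_zero [simp]: "adj (0::'a::cstar_algebra_1) = 0"
  by (metis add_cancel_right_right adj_add)

lemma adj_minus: "adj (- x::'a::cstar_algebra_1) = - adj x"
  by (metis add_eq_0_iff adj_add adj_zero)

lemma adj_diff: "adj (x - y::'a::cstar_algebra_1) = adj x - adj y"
  by (metis adj_add adj_minus diff_conv_add_uminus)

lemma adj_scaleR: "adj (r *\<^sub>R x::'a::cstar_algebra_1) = r *\<^sub>R adj x"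
  by (metis adj_cscale complex_cnj_complex_of_real cscale_of_real)

lemma adj_one [simp]: "adj (1::'a::cstar_algebra_1) = 1"
  by (metis adj_adj adj_mult mult.right_neutral)

lemma adj_power: "adj ((x::'a::cstar_algebra_1) ^ n) = adj x ^ n"
  by (induction n) (simp_all add: adj_mult power_commutes)

lemma adj_sum: "adj (sum f I) = (\<Sum>i\<in>I. adj (f i :: 'a::cstar_algebra_1))"
  by (induction I rule: infinite_finite_induct) (simp_all add: adj_add)

lemma norm_adj [simp]: "norm (adj (x::'a::cstar_algebra_1)) = norm x"
proof -
  have le: "norm y \<le> norm (adj y)" for y :: 'a
  proof (cases "y = 0")
    case False
    have "norm y * norm y = norm (adj y * y)" by (simp add: cstar_identity power2_eq_square)
    also have "\<dots> \<le> norm (adj y) * norm y" by (rule norm_mult_ineq)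
    finally show ?thesis using False by simp
  qed simp
  show ?thesis using le[of x] le[of "adj x"] by (simp add: adj_adj)
qed

lemma bounded_linear_adj: "bounded_linear (adj :: 'a::cstar_algebra_1 \<Rightarrow> 'a)"
  by (rule bounded_linear_intro[where K=1]) (simp_all add: adj_add adj_scaleR)

definition hermitian_part :: "'a::cstar_algebra_1 \<Rightarrow> 'a" where
  "hermitian_part v = (1/2) *\<^sub>R (v + adj v)"

lemma adj_hermitian_part [simp]: "adj (hermitian_part v) = hermitian_part v"
  by (simp add: hermitian_part_def adj_scaleR adj_add adj_adj add.commute)

lemma norm_hermitian_part_diff_le:
  assumes "adj b = b"
  shows "norm (hermitian_part v - b) \<le> norm (v - b)"
proof -
  have "hermitian_part v - b = (1/2) *\<^sub>R ((v - b) + adj (v - b))"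
    by (simp add: hermitian_part_def adj_diff assms algebra_simps flip: scaleR_add_left)
  also have "norm \<dots> \<le> (1/2) * (norm (v - b) + norm (adj (v - b)))"
    using norm_triangle_ineq[of "v - b" "adj (v - b)"] by simp
  finally show ?thesis by simp
qed

section \<open>Invertibility and the spectrum of selfadjoint elements\<close>

lemma geometric_series_inverse:
  fixes y :: "'a::{real_normed_algebra_1, banach}"
  assumes "norm y < 1"
  shows "summable (\<lambda>n. y ^ n)" "(1 - y) * (\<Sum>n. y ^ n) = 1" "(\<Sum>n. y ^ n) * (1 - y) = 1"
proof -
  have "summable (\<lambda>n. norm y ^ n)" by (rule summable_geometric) (use assms in simp)
  then have "summable (\<lambda>n. norm (y ^ n))"
    by (rule summable_comparison_test'[of _ 0]) (simp add: norm_power_ineq)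
  then show s: "summable (\<lambda>n. y ^ n)" by (rule summable_norm_cancel)
  have "(\<lambda>n. y ^ n) \<longlonglongrightarrow> 0" by (rule LIMSEQ_power_zero) (use assms in auto)
  then have tel: "(\<Sum>n. y ^ n - y ^ Suc n) = 1"
    using sums_unique[OF telescope_sums'] by fastforce
  have "(1 - y) * (\<Sum>n. y ^ n) = (\<Sum>n. (1 - y) * y ^ n)" by (rule suminf_mult[OF s, symmetric])
  also have "\<dots> = (\<Sum>n. y ^ n - y ^ Suc n)" by (simp add: algebra_simps)
  finally show "(1 - y) * (\<Sum>n. y ^ n) = 1" using tel by simp
  have "(\<Sum>n. y ^ n) * (1 - y) = (\<Sum>n. y ^ n * (1 - y))" by (rule suminf_mult2[OF s])
  also have "\<dots> = (\<Sum>n. y ^ n - y ^ Suc n)" by (simp add: algebra_simps power_commutes)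
  finally show "(\<Sum>n. y ^ n) * (1 - y) = 1" using tel by simp
qed

lemma cinvertible_diff_cscale_one:
  fixes d :: "'a::cstar_algebra_1"
  assumes "norm d < cmod \<mu>"
  shows "cinvertible (d - cscale \<mu> 1)"
proof -
  have \<mu>: "\<mu> \<noteq> 0" using assms by auto
  define z where "z = cscale (1/\<mu>) d"
  have "norm z < 1" using assms \<mu> by (simp add: z_def norm_cscale norm_divide divide_less_eq)
  then obtain N where N: "(1 - z) * N = 1" "N * (1 - z) = 1"
    using geometric_series_inverse by blast
  have "cscale (-\<mu>) z = - d"
    using \<mu> cscale_of_real[of "-1" d] by (simp add: z_def cscale_assoc)
  then have "d - cscale \<mu> 1 = cscale (-\<mu>) (1 - z)"
    by (simp add: cscale_diff_right cscale_minus_left)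
  with \<mu> N show ?thesis
    unfolding cinvertible_def by (intro exI[of _ "cscale (-1/\<mu>) N"]) (simp add: cscale_mult_cscale cscale_one)
qed

lemma norm_selfadjoint_add_imaginary_sq_le:
  fixes b :: "'a::cstar_algebra_1"
  assumes "adj b = b"
  shows "(norm (b + cscale (\<i> * of_real t) 1))\<^sup>2 \<le> (norm b)\<^sup>2 + t\<^sup>2"
proof -
  define v where "v = b + cscale (\<i> * of_real t) 1"
  have "adj v = b + cscale (- \<i> * of_real t) 1"
    by (simp add: v_def adj_add adj_cscale assms)
  then have "adj v * v = (b + cscale (- \<i> * of_real t) 1) * (b + cscale (\<i> * of_real t) 1)"
    by (simp add: v_def)
  also have "\<dots> = b * b + (cscale (\<i> * of_real t) b + cscale (- (\<i> * of_real t)) b)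
        + cscale ((- \<i> * of_real t) * (\<i> * of_real t)) 1"
    by (simp add: distrib_left distrib_right cscale_mult_cscale cscale_mult_left cscale_mult_right
        add_ac cscale_assoc cscale_add_right)
  also have "cscale (\<i> * of_real t) b + cscale (- (\<i> * of_real t)) b = 0"
    by (rule cscale_add_cscale_minus)
  also have "(- \<i> * of_real t) * (\<i> * of_real t) = complex_of_real (t\<^sup>2)"
    by (simp add: power2_eq_square algebra_simps)
  finally have "adj v * v = b * b + (t\<^sup>2) *\<^sub>R 1" by (simp flip: of_real_power)
  then have "(norm v)\<^sup>2 = norm (b * b + (t\<^sup>2) *\<^sub>R 1)" by (simp flip: cstar_identity)
  also have "\<dots> \<le> (norm b)\<^sup>2 + t\<^sup>2"
    using norm_triangle_ineq[of "b * b" "(t\<^sup>2) *\<^sub>R 1"] norm_mult_ineq[of b b]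
    by (simp add: power2_eq_square)
  finally show ?thesis by (simp add: v_def)
qed

text \<open>For \<open>\<lambda> = \<alpha> + \<i>\<beta>\<close> with \<open>\<beta> \<noteq> 0\<close> write \<open>c - \<lambda> = (c - \<alpha> + \<i>t) - \<i>(\<beta> + t)\<close>; by the
  previous bound this is invertible as soon as \<open>(\<beta> + t)\<^sup>2 > \<parallel>c - \<alpha>\<parallel>\<^sup>2 + t\<^sup>2\<close>.\<close>
lemma Im_eq_0_if_not_cinvertible:
  fixes c :: "'a::cstar_algebra_1"
  assumes "adj c = c" and l: "\<not> cinvertible (c - cscale l 1)"
  shows "Im l = 0"
proof (rule ccontr)
  assume ne: "Im l \<noteq> 0"
  define b where "b = c - Re l *\<^sub>R 1"
  define t where "t = ((norm b)\<^sup>2 + 1) / (2 * Im l)"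
  have "cscale l (1::'a) = Re l *\<^sub>R 1 + cscale (\<i> * of_real (Im l)) 1"
    by (metis complex_eq cscale_add_left cscale_of_real)
  moreover have "cscale (\<i> * of_real (Im l + t)) (1::'a)
      = cscale (\<i> * of_real (Im l)) 1 + cscale (\<i> * of_real t) 1"
    by (simp add: distrib_left cscale_add_left)
  ultimately have "c - cscale l 1 = (b + cscale (\<i> * of_real t) 1) - cscale (\<i> * of_real (Im l + t)) 1"
    by (simp add: b_def algebra_simps)
  with l cinvertible_diff_cscale_one
  have "\<not> norm (b + cscale (\<i> * of_real t) 1) < cmod (\<i> * of_real (Im l + t))" by metis
  then have "\<bar>Im l + t\<bar> \<le> norm (b + cscale (\<i> * of_real t) 1)"
    by (simp add: norm_mult flip: of_real_add)
  then have "(Im l + t)\<^sup>2 \<le> (norm (b + cscale (\<i> * of_real t) 1))\<^sup>2"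
    by (metis abs_ge_zero power2_abs power_mono)
  also have "\<dots> \<le> (norm b)\<^sup>2 + t\<^sup>2"
    by (rule norm_selfadjoint_add_imaginary_sq_le) (simp add: b_def adj_diff adj_scaleR assms)
  finally have "(Im l)\<^sup>2 + 2 * Im l * t \<le> (norm b)\<^sup>2" by (simp add: power2_eq_square algebra_simps)
  moreover have "2 * Im l * t = (norm b)\<^sup>2 + 1" using ne by (simp add: t_def)
  moreover have "(Im l)\<^sup>2 \<ge> 0" by simp
  ultimately show False by linarith
qed

section \<open>A norm criterion for nonnegativity\<close>

text \<open>A norm certificate of nonnegativity; unlike \<open>nonneg\<close>, it is evidently closed under sums.\<close>
definition nonneg_by_norm :: "'a::cstar_algebra_1 \<Rightarrow> bool" where
  "nonneg_by_norm c \<longleftrightarrow> adj c = c \<and> (\<exists>s\<ge>0. norm (s *\<^sub>R 1 - c) \<le> s)"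

lemma nonneg_by_norm_imp_nonneg:
  assumes "nonneg_by_norm c"
  shows "nonneg c"
proof -
  obtain s where sa: "adj c = c" and s: "s \<ge> 0" "norm (s *\<^sub>R 1 - c) \<le> s"
    using assms by (auto simp: nonneg_by_norm_def)
  have "Re l \<ge> 0 \<and> Im l = 0" if l: "\<not> cinvertible (c - cscale l 1)" for l
  proof -
    have "Im l = 0" by (rule Im_eq_0_if_not_cinvertible[OF sa l])
    then have "l = complex_of_real (Re l)" by (simp add: complex_eq_iff)
    then have "cscale l (1::'a) = Re l *\<^sub>R 1" by (metis cscale_of_real)
    moreover have "(c - s *\<^sub>R 1) - cscale (complex_of_real (Re l - s)) 1 = c - Re l *\<^sub>R 1"
      by (simp add: algebra_simps scaleR_diff_left del: of_real_diff)
    ultimately have "\<not> cinvertible ((c - s *\<^sub>R 1) - cscale (complex_of_real (Re l - s)) 1)"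
      using l by metis
    then have "\<not> norm (c - s *\<^sub>R 1) < cmod (complex_of_real (Re l - s))"
      using cinvertible_diff_cscale_one by blast
    then have "Re l \<ge> 0" using s by (simp add: norm_minus_commute flip: of_real_diff)
    with \<open>Im l = 0\<close> show ?thesis by simp
  qed
  then show ?thesis
    unfolding nonneg_def selfadjoint_def cspectrum_def
    by (auto simp: sa intro!: exI[of _ "Re _"] complex_eqI)
qed

lemma nonneg_by_norm_add:
  assumes "nonneg_by_norm a" "nonneg_by_norm b"
  shows "nonneg_by_norm (a + b)"
proof -
  obtain s t where s: "s \<ge> 0" "norm (s *\<^sub>R 1 - a) \<le> s" and t: "t \<ge> 0" "norm (t *\<^sub>R 1 - b) \<le> t"
    using assms by (auto simp: nonneg_by_norm_def)
  have "(s + t) *\<^sub>R 1 - (a + b) = (s *\<^sub>R 1 - a) + (t *\<^sub>R 1 - b)" by (simp add: algebra_simps)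
  then have "norm ((s + t) *\<^sub>R 1 - (a + b)) \<le> s + t"
    using s t by (metis add_mono norm_triangle_ineq order_trans)
  then show ?thesis
    using assms s t by (auto simp: nonneg_by_norm_def adj_add intro!: exI[of _ "s + t"])
qed

lemma nonneg_by_norm_zero: "nonneg_by_norm 0"
  by (auto simp: nonneg_by_norm_def intro!: exI[of _ 0])

lemma nonneg_by_norm_sum: "(\<And>i. i \<in> I \<Longrightarrow> nonneg_by_norm (f i)) \<Longrightarrow> nonneg_by_norm (sum f I)"
  by (induction I rule: infinite_finite_induct) (simp_all add: nonneg_by_norm_zero nonneg_by_norm_add)

lemma nonneg_by_norm_scaleR:
  assumes "r \<ge> 0" "nonneg_by_norm a"
  shows "nonneg_by_norm (r *\<^sub>R a)"
proof -
  obtain s where s: "s \<ge> 0" "norm (s *\<^sub>R 1 - a) \<le> s" using assms(2) by (auto simp: nonneg_by_norm_def)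
  have "(r * s) *\<^sub>R 1 - r *\<^sub>R a = r *\<^sub>R (s *\<^sub>R 1 - a)" by (simp add: algebra_simps)
  then have "norm ((r * s) *\<^sub>R 1 - r *\<^sub>R a) \<le> r * s" using assms s by (simp add: mult_left_mono)
  then show ?thesis
    using assms s by (auto simp: nonneg_by_norm_def adj_scaleR intro!: exI[of _ "r * s"])
qed

lemma nonneg_by_norm_diff_scaleR_one:
  assumes "adj b = b" "norm b \<le> s"
  shows "nonneg_by_norm (s *\<^sub>R 1 - b)"
  using assms order_trans[OF norm_ge_zero assms(2)]
  by (auto simp: nonneg_by_norm_def adj_diff adj_scaleR intro!: exI[of _ s])

section \<open>Squares and square roots\<close>

text \<open>If \<open>p\<close> and \<open>w\<close> are commuting selfadjoint elements with \<open>p\<^sup>2 + w\<^sup>2 = 1\<close>, then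
  \<open>p + \<i>w\<close> is unitary, and \<open>p\<close> is the mean of it and its adjoint.\<close>
lemma norm_le_one_if_squares_sum_one:
  fixes p w :: "'a::cstar_algebra_1"
  assumes ap: "adj p = p" and aw: "adj w = w" and c: "p * w = w * p" and s: "p * p + w * w = 1"
  shows "norm p \<le> 1"
proof -
  define v where "v = p + cscale \<i> w"
  have av: "adj v = p + cscale (- \<i>) w" by (simp add: v_def adj_add adj_cscale ap aw)
  have "adj v * v = (p + cscale (- \<i>) w) * (p + cscale \<i> w)" by (subst av) (simp only: v_def)
  also have "\<dots> = p * p + p * cscale \<i> w + (cscale (- \<i>) w * p + cscale (- \<i>) w * cscale \<i> w)"
    by (simp only: distrib_left distrib_right add_ac)
  also have "p * cscale \<i> w = cscale \<i> (p * w)" by (rule cscale_mult_right)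
  also have "cscale (- \<i>) w * p = cscale (- \<i>) (p * w)" by (simp only: cscale_mult_left c)
  also have "cscale (- \<i>) w * cscale \<i> w = w * w" by (simp add: cscale_mult_cscale cscale_one)
  also have "p * p + cscale \<i> (p * w) + (cscale (- \<i>) (p * w) + w * w)
      = p * p + w * w + (cscale \<i> (p * w) + cscale (- \<i>) (p * w))"
    by (simp only: add_ac)
  finally have "adj v * v = 1" by (simp add: s cscale_add_cscale_minus)
  then have "norm v = 1" using cstar_identity[of v] norm_ge_zero[of v] by (auto simp: power2_eq_1_iff)
  have "v + adj v = p + p + (cscale \<i> w + cscale (- \<i>) w)" by (subst av) (simp only: v_def add_ac)
  also have "\<dots> = 2 *\<^sub>R p" by (simp only: cscale_add_cscale_minus add_0_right scaleR_2)
  finally have "norm (2 *\<^sub>R p) \<le> norm v + norm (adj v)" by (metis norm_triangle_ineq)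
  then show ?thesis using \<open>norm v = 1\<close> by simp
qed

lemma abs_gchoose_half_le_one: "\<bar>(1/2::real) gchoose k\<bar> \<le> 1"
proof (induction k)
  case (Suc k)
  have "(1/2::real) * ((1/2) gchoose k)
      = of_nat k * ((1/2) gchoose k) + of_nat (Suc k) * ((1/2) gchoose (Suc k))"
    by (rule gbinomial_mult_1)
  then have eq: "((1/2::real) gchoose (Suc k)) = (1/2 - real k) / (real k + 1) * ((1/2) gchoose k)"
    by (simp add: field_simps)
  have "\<bar>(1/2 - real k) / (real k + 1)\<bar> \<le> 1" by (simp add: abs_divide divide_le_eq_1)
  then have "\<bar>((1/2::real) gchoose (Suc k))\<bar> \<le> 1 * 1"
    unfolding eq abs_mult using Suc by (intro mult_mono) auto
  then show ?case by simp
qed simp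

text \<open>The coefficients of \<open>\<surd>(1 - t) = \<Sum>k. sqrt_coeff k * t ^ k\<close>.\<close>
definition sqrt_coeff :: "nat \<Rightarrow> real" where
  "sqrt_coeff k = (-1)^k * ((1/2) gchoose k)"

lemma abs_sqrt_coeff_le_one: "\<bar>sqrt_coeff k\<bar> \<le> 1"
  using abs_gchoose_half_le_one[of k] by (simp add: sqrt_coeff_def abs_mult)

lemma sqrt_coeff_convolution:
  "(\<Sum>i\<le>k. sqrt_coeff i * sqrt_coeff (k - i)) = (if k = 0 then 1 else if k = 1 then -1 else 0)"
proof -
  have "(\<Sum>i\<le>k. sqrt_coeff i * sqrt_coeff (k - i))
      = (-1)^k * (\<Sum>i=0..k. ((1/2::real) gchoose i) * ((1/2) gchoose (k - i)))"
    unfolding sqrt_coeff_def sum_distrib_left atMost_atLeast0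
    by (intro sum.cong refl) (simp add: mult_ac flip: power_add)
  also have "\<dots> = (-1)^k * of_nat (1 choose k)"
    by (simp add: gbinomial_Vandermonde binomial_gbinomial)
  also have "\<dots> = (if k = 0 then 1 else if k = 1 then -1 else 0)"
    by (cases "k \<le> 1") (auto simp: binomial_eq_0 le_Suc_eq)
  finally show ?thesis .
qed

lemma norm_sqrt_coeff_term_le:
  "norm (sqrt_coeff k *\<^sub>R (y::'a::real_normed_algebra_1) ^ (2 * k)) \<le> (norm y ^ 2) ^ k"
proof -
  have "norm (sqrt_coeff k *\<^sub>R y ^ (2 * k)) = \<bar>sqrt_coeff k\<bar> * norm (y ^ (2 * k))" by simp
  also have "\<dots> \<le> 1 * norm y ^ (2 * k)"
    by (intro mult_mono abs_sqrt_coeff_le_one norm_power_ineq) auto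
  finally show ?thesis by (simp add: power_mult)
qed

lemma sqrt_coeff_Cauchy_product:
  fixes y :: "'a::real_normed_algebra_1"
  shows "(\<Sum>i\<le>k. (sqrt_coeff i *\<^sub>R y ^ (2 * i)) * (sqrt_coeff (k - i) *\<^sub>R y ^ (2 * (k - i))))
    = (if k = 0 then 1 else if k = 1 then - (y * y) else 0)"
proof -
  have "(\<Sum>i\<le>k. (sqrt_coeff i *\<^sub>R y ^ (2 * i)) * (sqrt_coeff (k - i) *\<^sub>R y ^ (2 * (k - i))))
      = (\<Sum>i\<le>k. (sqrt_coeff i * sqrt_coeff (k - i)) *\<^sub>R y ^ (2 * k))"
  proof (rule sum.cong)
    fix i assume "i \<in> {..k}"
    then have "2 * i + 2 * (k - i) = 2 * k" by simp
    then have "y ^ (2 * i) * y ^ (2 * (k - i)) = y ^ (2 * k)" by (metis power_add)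
    then show "(sqrt_coeff i *\<^sub>R y ^ (2 * i)) * (sqrt_coeff (k - i) *\<^sub>R y ^ (2 * (k - i)))
        = (sqrt_coeff i * sqrt_coeff (k - i)) *\<^sub>R y ^ (2 * k)"
      by simp
  qed simp
  then show ?thesis
    by (auto simp: sqrt_coeff_convolution power2_eq_square simp flip: scaleR_sum_left)
qed

lemma sqrt_one_minus_square_exists:
  fixes y :: "'a::cstar_algebra_1"
  assumes ay: "adj y = y" and ny: "norm y < 1"
  shows "\<exists>w. adj w = w \<and> w * y = y * w \<and> w * w = 1 - y * y"
proof -
  define a where "a k = sqrt_coeff k *\<^sub>R y ^ (2 * k)" for k
  have "norm y ^ 2 < 1" using ny by (simp add: power_less_one_iff abs_less_iff)
  then have g: "summable (\<lambda>k. (norm y ^ 2) ^ k)" by (intro summable_geometric) simp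
  have sn: "summable (\<lambda>k. norm (a k))"
    by (rule summable_comparison_test'[OF g, of 0]) (use norm_sqrt_coeff_term_le[of _ y] in \<open>simp add: a_def\<close>)
  then have s: "summable a" by (rule summable_norm_cancel)
  define w where "w = suminf a"
  have "(\<lambda>k. \<Sum>i\<le>k. a i * a (k - i)) sums (w * w)"
    unfolding w_def by (rule Cauchy_product_sums[OF sn sn])
  also have "(\<lambda>k. \<Sum>i\<le>k. a i * a (k - i)) = (\<lambda>k. if k = 0 then 1 else if k = 1 then - (y * y) else 0)"
    by (simp only: a_def sqrt_coeff_Cauchy_product)
  finally have "(\<lambda>k. if k = 0 then 1 else if k = 1 then - (y * y) else 0) sums (w * w)" .
  moreover have "(\<lambda>k. if k = 0 then 1 else if k = 1 then - (y * y) else (0::'a)) sums (1 - y * y)"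
    using sums_finite[of "{0::nat, 1}" "\<lambda>k. if k = 0 then 1 else if k = 1 then - (y * y) else (0::'a)"]
    by simp
  ultimately have ww: "w * w = 1 - y * y" using sums_unique2 by blast
  have "y * w = (\<Sum>k. y * a k)" unfolding w_def by (rule suminf_mult[OF s, symmetric])
  also have "\<dots> = (\<Sum>k. a k * y)" by (simp add: a_def power_commutes)
  also have "\<dots> = w * y" unfolding w_def by (rule suminf_mult2[OF s, symmetric])
  finally have wy: "w * y = y * w" by simp
  have "adj w = (\<Sum>k. adj (a k))" unfolding w_def by (rule bounded_linear.suminf[OF bounded_linear_adj s])
  also have "\<dots> = w" unfolding w_def
    by (rule arg_cong[where f=suminf]) (simp add: a_def fun_eq_iff adj_scaleR adj_power ay)
  finally show ?thesis using ww wy by blast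
qed

lemma norm_scaleR_one_minus_square_le:
  fixes y :: "'a::cstar_algebra_1"
  assumes ay: "adj y = y" and s: "(norm y)\<^sup>2 < s"
  shows "norm (s *\<^sub>R 1 - y * y) \<le> s"
proof -
  have s0: "s > 0" using s by (smt (verit) zero_le_power2)
  define y' where "y' = (1 / sqrt s) *\<^sub>R y"
  have ay': "adj y' = y'" by (simp add: y'_def adj_scaleR ay)
  have "norm y < sqrt s" using s s0 by (metis norm_ge_zero real_less_rsqrt)
  then have "norm y' < 1" using s0 by (simp add: y'_def divide_less_eq)
  then obtain w where w: "adj w = w" "w * y' = y' * w" "w * w = 1 - y' * y'"
    using sqrt_one_minus_square_exists[OF ay'] by blast
  have "norm w \<le> 1" by (rule norm_le_one_if_squares_sum_one[OF w(1) ay' w(2)]) (simp add: w(3))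
  then have "norm (1 - y' * y') \<le> 1"
    using w by (metis cstar_identity abs_norm_cancel norm_ge_zero power_le_one)
  moreover have "s *\<^sub>R 1 - y * y = s *\<^sub>R (1 - y' * y')"
    using s0 by (simp add: y'_def scaleR_right_diff_distrib)
  ultimately show ?thesis using s0 by simp
qed

lemma norm_scaleR_one_minus_scaled_square_le:
  fixes t :: "'a::cstar_algebra_1"
  assumes "adj t = t" "K \<ge> 0" "K * (norm t)\<^sup>2 < S"
  shows "norm (S *\<^sub>R 1 - K *\<^sub>R (t * t)) \<le> S"
proof -
  define y where "y = sqrt K *\<^sub>R t"
  have "(norm y)\<^sup>2 < S" using assms(2,3) by (simp add: y_def power_mult_distrib)
  then have "norm (S *\<^sub>R 1 - y * y) \<le> S"
    by (rule norm_scaleR_one_minus_square_le[rotated]) (simp add: y_def adj_scaleR assms(1))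
  moreover have "y * y = K *\<^sub>R (t * t)" using assms(2) by (simp add: y_def)
  ultimately show ?thesis by simp
qed

lemma nonneg_by_norm_square:
  assumes "adj y = y"
  shows "nonneg_by_norm (y * y)"
proof -
  have "norm (((norm y)\<^sup>2 + 1) *\<^sub>R 1 - y * y) \<le> (norm y)\<^sup>2 + 1"
    by (rule norm_scaleR_one_minus_square_le[OF assms]) simp
  moreover have "adj (y * y) = y * y" by (simp add: adj_mult assms)
  ultimately show ?thesis
    unfolding nonneg_by_norm_def by (intro conjI exI[of _ "(norm y)\<^sup>2 + 1"]) auto
qed

lemma square_shift_identity:
  fixes \<alpha> :: "'a::cstar_algebra_1"
  assumes "\<delta> > 0"
  shows "(1/\<delta>) *\<^sub>R ((\<alpha> - (\<delta>/2) *\<^sub>R 1) * (\<alpha> - (\<delta>/2) *\<^sub>R 1)) = (1/\<delta>) *\<^sub>R (\<alpha> * \<alpha>) - \<alpha> + (\<delta>/4) *\<^sub>R 1"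
proof -
  have "(\<alpha> - (\<delta>/2) *\<^sub>R 1) * (\<alpha> - (\<delta>/2) *\<^sub>R 1) = \<alpha> * \<alpha> - \<delta> *\<^sub>R \<alpha> + (\<delta>^2/4) *\<^sub>R 1"
    by (simp add: algebra_simps power2_eq_square scaleR_add_left[symmetric])
  moreover have h: "(1/2::real) *\<^sub>R \<alpha> + (1/2) *\<^sub>R \<alpha> = \<alpha>" by (simp flip: scaleR_add_left)
  ultimately show ?thesis using assms by (simp add: algebra_simps power2_eq_square h)
qed

lemma nonneg_by_norm_sum_squares_diff:
  fixes a :: "'a::cstar_algebra_1" and w :: "'i \<Rightarrow> 'a"
  assumes \<delta>: "\<delta> > 0" and I: "finite I" "i0 \<in> I" and sa: "adj a = a" "\<And>i. i \<in> I \<Longrightarrow> adj (w i) = w i"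
    and close: "norm (a - w i0) \<le> 3/4 * \<delta>"
  shows "nonneg_by_norm ((1/\<delta>) *\<^sub>R (\<Sum>i\<in>I. w i * w i) + \<delta> *\<^sub>R 1 - a)"
proof -
  define \<alpha> where "\<alpha> = w i0"
  have "(\<Sum>i\<in>I. w i * w i) = \<alpha> * \<alpha> + (\<Sum>i\<in>I - {i0}. w i * w i)"
    using I by (simp add: \<alpha>_def sum.remove)
  moreover have "(\<delta>/4) *\<^sub>R (1::'a) + (3/4 * \<delta>) *\<^sub>R 1 = \<delta> *\<^sub>R 1" by (simp flip: scaleR_add_left)
  ultimately have "(1/\<delta>) *\<^sub>R (\<Sum>i\<in>I. w i * w i) + \<delta> *\<^sub>R 1 - a
      = (1/\<delta>) *\<^sub>R ((\<alpha> - (\<delta>/2) *\<^sub>R 1) * (\<alpha> - (\<delta>/2) *\<^sub>R 1)) + (1/\<delta>) *\<^sub>R (\<Sum>i\<in>I - {i0}. w i * w i)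
        + ((3/4 * \<delta>) *\<^sub>R 1 - (a - \<alpha>))"
    unfolding square_shift_identity[OF \<delta>] by (simp add: algebra_simps)
  also have "nonneg_by_norm \<dots>"
    using \<delta> sa close
    by (intro nonneg_by_norm_add nonneg_by_norm_scaleR nonneg_by_norm_square nonneg_by_norm_sum
        nonneg_by_norm_diff_scaleR_one) (auto simp: \<alpha>_def adj_diff adj_scaleR I(2))
  finally show ?thesis .
qed

lemma nonneg_by_norm_sum_squares_add:
  fixes a :: "'a::cstar_algebra_1" and w :: "'i \<Rightarrow> 'a"
  assumes \<delta>: "\<delta> > 0" and I: "finite I" "i0 \<in> I" and sa: "adj a = a" "\<And>i. i \<in> I \<Longrightarrow> adj (w i) = w i"
    and close: "norm (a - w i0) \<le> 3/4 * \<delta>"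
  shows "nonneg_by_norm ((1/\<delta>) *\<^sub>R (\<Sum>i\<in>I. w i * w i) + \<delta> *\<^sub>R 1 + a)"
proof -
  have "norm (- a - - w i0) \<le> 3/4 * \<delta>" using close by (simp add: norm_minus_commute)
  then have "nonneg_by_norm ((1/\<delta>) *\<^sub>R (\<Sum>i\<in>I. (- w i) * (- w i)) + \<delta> *\<^sub>R 1 - (- a))"
    using sa by (intro nonneg_by_norm_sum_squares_diff[OF \<delta> I]) (simp_all add: adj_minus)
  then show ?thesis by simp
qed

section \<open>The elements \<open>t (1 + K t\<^sup>2)\<^sup>-\<^sup>1\<close>\<close>

lemma inverse_commute:
  fixes m q t :: "'a::monoid_mult"
  assumes "m * q = 1" "q * m = 1" "m * t = t * m"
  shows "q * t = t * q"
proof -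
  have "q * t = q * t * (m * q)" using assms(1) by simp
  also have "\<dots> = (q * m) * t * q" by (simp add: assms(3) mult.assoc)
  finally show ?thesis using assms(2) by simp
qed

lemma adj_right_inverse:
  fixes m q :: "'a::cstar_algebra_1"
  assumes "adj m = m" "m * q = 1"
  shows "adj q = q"
proof -
  have "adj q * m = 1" by (metis adj_mult adj_one assms)
  have "adj q = adj q * (m * q)" by (simp add: assms(2))
  also have "\<dots> = (adj q * m) * q" by (simp only: mult.assoc)
  finally show ?thesis using \<open>adj q * m = 1\<close> by simp
qed

lemma adj_mult_inverse_one_add_square:
  fixes t q :: "'a::cstar_algebra_1"
  assumes "adj t = t" "(1 + K *\<^sub>R (t * t)) * q = 1" "q * (1 + K *\<^sub>R (t * t)) = 1"
  shows "adj q = q" "q * t = t * q" "adj (t * q) = t * q"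
proof -
  show aq: "adj q = q"
    by (rule adj_right_inverse[OF _ assms(2)]) (simp add: adj_add adj_scaleR adj_mult assms(1))
  show qt: "q * t = t * q"
    by (rule inverse_commute[OF assms(2,3)]) (simp add: algebra_simps)
  show "adj (t * q) = t * q" by (simp add: adj_mult aq assms(1) qt)
qed

lemma norm_mult_inverse_one_add_square_le:
  fixes t q :: "'a::cstar_algebra_1"
  assumes at: "adj t = t" and K: "K > 0"
    and mq: "(1 + K *\<^sub>R (t * t)) * q = 1" and qm: "q * (1 + K *\<^sub>R (t * t)) = 1"
  shows "norm (t * q) \<le> 1 / (2 * sqrt K)"
proof -
  note aq = adj_mult_inverse_one_add_square(1)[OF at mq qm]
  note qt = adj_mult_inverse_one_add_square(2)[OF at mq qm]
  have qt': "q * (t * y) = t * (q * y)" for y by (simp add: mult.assoc[symmetric] qt)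
  have sK: "sqrt K * sqrt K = K" using K by simp
  define p where "p = (2 * sqrt K) *\<^sub>R (t * q)"
  define w where "w = q - K *\<^sub>R (q * (t * t))"
  have ap: "adj p = p" by (simp add: p_def adj_scaleR adj_mult aq at qt)
  have aw: "adj w = w" by (simp add: w_def adj_diff adj_scaleR adj_mult aq at qt algebra_simps qt')
  have pw: "p * w = w * p" by (simp add: p_def w_def algebra_simps qt qt')
  have "p * p + w * w = ((1 + K *\<^sub>R (t * t)) * q) * ((1 + K *\<^sub>R (t * t)) * q)"
  proof -
    have "sqrt K * (sqrt K * 4) = K + (K + (K + K))" using sK by (simp add: algebra_simps)
    then have "(sqrt K * (sqrt K * 4)) *\<^sub>R y = K *\<^sub>R y + (K *\<^sub>R y + (K *\<^sub>R y + K *\<^sub>R y))"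
      for y :: 'a
      by (simp only: scaleR_add_left)
    then show ?thesis by (simp add: p_def w_def algebra_simps qt qt' sK)
  qed
  also have "\<dots> = 1" by (simp add: mq)
  finally have "norm p \<le> 1" by (rule norm_le_one_if_squares_sum_one[OF ap aw pw])
  then show ?thesis using K by (simp add: p_def field_simps mult.commute)
qed

section \<open>The uniform closure of a star subalgebra\<close>

lemma summable_if_norm_le_geometric:
  fixes a :: "nat \<Rightarrow> 'b::banach"
  assumes "\<And>n. norm (a n) \<le> c * \<theta>^n" "0 \<le> \<theta>" "\<theta> < 1"
  shows "summable a"
proof -
  have "summable (\<lambda>n. c * \<theta>^n)" using assms by (intro summable_mult summable_geometric) simp
  then show ?thesis
    by (rule summable_norm_cancel[OF summable_comparison_test'[of _ 0]]) (simp add: assms)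
qed

lemma norm_suminf_diff_le_geometric:
  fixes a :: "nat \<Rightarrow> 'b::banach"
  assumes b: "\<And>n. norm (a n) \<le> c * \<theta>^n" and \<theta>: "0 \<le> \<theta>" "\<theta> < 1"
  shows "norm ((\<Sum>n. a n) - (\<Sum>i<N. a i)) \<le> c * \<theta>^N / (1 - \<theta>)"
proof -
  have "(\<Sum>n. a n) - (\<Sum>i<N. a i) = (\<Sum>n. a (n + N))"
    using suminf_minus_initial_segment[OF summable_if_norm_le_geometric[OF assms]] by simp
  also have "norm \<dots> \<le> (\<Sum>n. c * \<theta>^N * \<theta>^n)"
  proof (rule norm_suminf_le)
    show "norm (a (n + N)) \<le> c * \<theta>^N * \<theta>^n" for n using b[of "n + N"] by (simp add: power_add mult_ac)
    show "summable (\<lambda>n. c * \<theta>^N * \<theta>^n)" using \<theta> by (intro summable_mult summable_geometric) simp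
  qed
  also have "\<dots> = c * \<theta>^N / (1 - \<theta>)" using \<theta> by (simp add: suminf_mult suminf_geometric)
  finally show ?thesis .
qed

lemma norm_mult_diff_le:
  fixes a b c d :: "'a::real_normed_algebra"
  shows "norm (c * d - a * b) \<le> norm (c - a) * norm d + norm a * norm (d - b)"
proof -
  have "c * d - a * b = (c - a) * d + a * (d - b)" by (simp add: algebra_simps)
  then show ?thesis by (metis norm_triangle_le norm_mult_ineq add_mono)
qed

lemma continuous_map_scaleR:
  "continuous_map X euclidean (u::'x \<Rightarrow> 'a::real_normed_vector) \<Longrightarrow> continuous_map X euclidean (\<lambda>z. r *\<^sub>R u z)"
  by (simp add: continuous_map_atin tendsto_scaleR)

lemma continuous_map_mult:
  "continuous_map X euclidean (u::'x \<Rightarrow> 'a::real_normed_algebra) \<Longrightarrow> continuous_map X euclidean v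
    \<Longrightarrow> continuous_map X euclidean (\<lambda>z. u z * v z)"
  by (simp add: continuous_map_atin tendsto_mult)

lemma continuous_map_adj:
  "continuous_map X euclidean (u::'x \<Rightarrow> 'a::cstar_algebra_1) \<Longrightarrow> continuous_map X euclidean (\<lambda>z. adj (u z))"
  by (simp add: continuous_map_atin bounded_linear.tendsto[OF bounded_linear_adj])

locale unital_star_subalgebra =
  fixes X :: "'x topology" and E :: "('x \<Rightarrow> 'a::cstar_algebra_1) set"
  assumes compact: "compact_space X" and subalgebra: "star_subalgebra X E"
    and one_in_closure: "(\<lambda>z. 1) \<in> uclosure X E"
begin

abbreviation Ebar :: "('x \<Rightarrow> 'a) set" where "Ebar \<equiv> uclosure X E"

lemma E_add: "u \<in> E \<Longrightarrow> v \<in> E \<Longrightarrow> (\<lambda>z. u z + v z) \<in> E"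
  and E_mult: "u \<in> E \<Longrightarrow> v \<in> E \<Longrightarrow> (\<lambda>z. u z * v z) \<in> E"
  and E_adj: "u \<in> E \<Longrightarrow> (\<lambda>z. adj (u z)) \<in> E"
  and E_cscale: "u \<in> E \<Longrightarrow> (\<lambda>z. cscale c (u z)) \<in> E"
  using subalgebra by (simp_all add: star_subalgebra_def)

lemma E_scaleR: "u \<in> E \<Longrightarrow> (\<lambda>z. r *\<^sub>R u z) \<in> E"
  using E_cscale[of u "complex_of_real r"] by simp

lemma E_diff: "u \<in> E \<Longrightarrow> v \<in> E \<Longrightarrow> (\<lambda>z. u z - v z) \<in> E"
  using E_add[of u "\<lambda>z. (-1) *\<^sub>R v z"] E_scaleR[of v "-1"] by simp

lemma E_subset_uclosure: "u \<in> E \<Longrightarrow> u \<in> Ebar"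
  using subalgebra by (auto simp: uclosure_def star_subalgebra_def intro: bexI[of _ u])

lemma uclosure_continuous: "u \<in> Ebar \<Longrightarrow> continuous_map X euclidean u"
  by (simp add: uclosure_def CXA_def)

lemma uclosure_approx: "u \<in> Ebar \<Longrightarrow> \<epsilon> > 0 \<Longrightarrow> \<exists>v\<in>E. \<forall>z\<in>topspace X. norm (v z - u z) < \<epsilon>"
  by (simp add: uclosure_def)

lemma uclosure_bounded:
  assumes "u \<in> Ebar"
  shows "\<exists>B. \<forall>z\<in>topspace X. norm (u z) \<le> B"
proof -
  have "compactin euclidean (u ` topspace X)"
    using compact uclosure_continuous[OF assms] unfolding compact_space_def by (rule image_compactin)
  then have "bounded (u ` topspace X)" by (simp add: compact_imp_bounded)
  then show ?thesis by (auto simp: bounded_iff)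
qed

lemma uclosure_add:
  assumes "u \<in> Ebar" "v \<in> Ebar"
  shows "(\<lambda>z. u z + v z) \<in> Ebar"
  unfolding uclosure_def CXA_def
proof (intro CollectI conjI allI impI)
  show "continuous_map X euclidean (\<lambda>z. u z + v z)"
    using assms uclosure_continuous by (simp add: continuous_map_add)
  fix \<epsilon> :: real assume "\<epsilon> > 0"
  then obtain u' v' where u': "u' \<in> E" "\<forall>z\<in>topspace X. norm (u' z - u z) < \<epsilon>/2"
    and v': "v' \<in> E" "\<forall>z\<in>topspace X. norm (v' z - v z) < \<epsilon>/2"
    using uclosure_approx[OF assms(1), of "\<epsilon>/2"] uclosure_approx[OF assms(2), of "\<epsilon>/2"] by auto
  show "\<exists>w\<in>E. \<forall>z\<in>topspace X. norm (w z - (u z + v z)) < \<epsilon>"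
  proof (intro bexI[OF _ E_add[OF u'(1) v'(1)]] ballI)
    fix z assume "z \<in> topspace X"
    then have "norm (u' z - u z) + norm (v' z - v z) < \<epsilon>" using u' v' by fastforce
    then show "norm (u' z + v' z - (u z + v z)) < \<epsilon>" by (simp add: add_diff_add norm_triangle_lt)
  qed
qed

lemma uclosure_scaleR: assumes "u \<in> Ebar" shows "(\<lambda>z. r *\<^sub>R u z) \<in> Ebar"
  unfolding uclosure_def CXA_def
proof (intro CollectI conjI allI impI)
  show "continuous_map X euclidean (\<lambda>z. r *\<^sub>R u z)"
    using assms uclosure_continuous by (simp add: continuous_map_scaleR)
  fix \<epsilon> :: real assume e: "\<epsilon> > 0"
  obtain u' where u': "u' \<in> E" "\<forall>z\<in>topspace X. norm (u' z - u z) < \<epsilon>/(\<bar>r\<bar> + 1)"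
    using uclosure_approx[OF assms(1), of "\<epsilon>/(\<bar>r\<bar>+1)"] e by auto
  show "\<exists>w\<in>E. \<forall>z\<in>topspace X. norm (w z - r *\<^sub>R u z) < \<epsilon>"
  proof (intro bexI[OF _ E_scaleR[OF u'(1)]] ballI)
    fix z assume z: "z \<in> topspace X"
    have "norm (r *\<^sub>R u' z - r *\<^sub>R u z) = \<bar>r\<bar> * norm (u' z - u z)"
      by (metis norm_scaleR scaleR_diff_right)
    also have "\<dots> \<le> \<bar>r\<bar> * (\<epsilon>/(\<bar>r\<bar> + 1))" using u'(2) z by (intro mult_left_mono) auto
    also have "\<dots> < \<epsilon>" using e by (simp add: field_simps)
    finally show "norm (r *\<^sub>R u' z - r *\<^sub>R u z) < \<epsilon>" .
  qed
qed

lemma uclosure_adj: assumes "u \<in> Ebar" shows "(\<lambda>z. adj (u z)) \<in> Ebar"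
  unfolding uclosure_def CXA_def
proof (intro CollectI conjI allI impI)
  show "continuous_map X euclidean (\<lambda>z. adj (u z))"
    using assms uclosure_continuous by (simp add: continuous_map_adj)
  fix \<epsilon> :: real assume e: "\<epsilon> > 0"
  obtain u' where u': "u' \<in> E" "\<forall>z\<in>topspace X. norm (u' z - u z) < \<epsilon>"
    using uclosure_approx[OF assms(1), of "\<epsilon>"] e by auto
  show "\<exists>w\<in>E. \<forall>z\<in>topspace X. norm (w z - adj (u z)) < \<epsilon>"
    by (intro bexI[OF _ E_adj[OF u'(1)]] ballI) (use u' in \<open>simp add: adj_diff[symmetric]\<close>)
qed

lemma uclosure_mult: assumes "u \<in> Ebar" "v \<in> Ebar" shows "(\<lambda>z. u z * v z) \<in> Ebar"
  unfolding uclosure_def CXA_def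
proof (intro CollectI conjI allI impI)
  show "continuous_map X euclidean (\<lambda>z. u z * v z)"
    using assms uclosure_continuous by (simp add: continuous_map_mult)
  fix \<epsilon> :: real assume e: "\<epsilon> > 0"
  obtain Bu where Bu: "\<forall>z\<in>topspace X. norm (u z) \<le> Bu" using uclosure_bounded[OF assms(1)] by blast
  obtain Bv where Bv: "\<forall>z\<in>topspace X. norm (v z) \<le> Bv" using uclosure_bounded[OF assms(2)] by blast
  define \<eta> where "\<eta> = min 1 (\<epsilon> / (\<bar>Bu\<bar> + \<bar>Bv\<bar> + 2))"
  have D: "\<bar>Bu\<bar> + \<bar>Bv\<bar> + 2 > 0" by simp
  have \<eta>: "\<eta> > 0" "\<eta> \<le> 1" "\<eta> * (\<bar>Bu\<bar> + \<bar>Bv\<bar> + 2) \<le> \<epsilon>"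
  proof -
    show "\<eta> > 0" using e D by (simp add: \<eta>_def)
    show "\<eta> \<le> 1" by (simp add: \<eta>_def)
    have "\<eta> \<le> \<epsilon> / (\<bar>Bu\<bar> + \<bar>Bv\<bar> + 2)" by (simp add: \<eta>_def)
    then show "\<eta> * (\<bar>Bu\<bar> + \<bar>Bv\<bar> + 2) \<le> \<epsilon>" using D by (simp add: pos_le_divide_eq)
  qed
  obtain u' where u': "u' \<in> E" "\<forall>z\<in>topspace X. norm (u' z - u z) < \<eta>"
    using uclosure_approx[OF assms(1) \<eta>(1)] by auto
  obtain v' where v': "v' \<in> E" "\<forall>z\<in>topspace X. norm (v' z - v z) < \<eta>"
    using uclosure_approx[OF assms(2) \<eta>(1)] by auto
  show "\<exists>w\<in>E. \<forall>z\<in>topspace X. norm (w z - u z * v z) < \<epsilon>"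
  proof (intro bexI[OF _ E_mult[OF u'(1) v'(1)]] ballI)
    fix z assume z: "z \<in> topspace X"
    have nv': "norm (v' z) \<le> \<bar>Bv\<bar> + 1"
      using v'(2) Bv z \<eta>(2) norm_triangle_ineq2[of "v' z" "v z"] by fastforce
    have "norm (u' z * v' z - u z * v z) \<le> norm (u' z - u z) * norm (v' z) + norm (u z) * norm (v' z - v z)"
      by (rule norm_mult_diff_le)
    also have "\<dots> \<le> \<eta> * (\<bar>Bv\<bar> + 1) + \<bar>Bu\<bar> * \<eta>"
    proof (rule add_mono)
      show "norm (u' z - u z) * norm (v' z) \<le> \<eta> * (\<bar>Bv\<bar> + 1)"
        by (intro mult_mono) (use u'(2) z nv' \<eta>(1) in \<open>auto intro: less_imp_le\<close>)
      have "norm (u z) \<le> \<bar>Bu\<bar>" using Bu z by fastforce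
      then show "norm (u z) * norm (v' z - v z) \<le> \<bar>Bu\<bar> * \<eta>"
        by (intro mult_mono) (use v'(2) z \<eta>(1) in \<open>auto intro: less_imp_le\<close>)
    qed
    also have "\<dots> = \<eta> * (\<bar>Bu\<bar> + \<bar>Bv\<bar> + 2) - \<eta>" by (simp add: algebra_simps)
    also have "\<dots> < \<epsilon>" using \<eta> by linarith
    finally show "norm (u' z * v' z - u z * v z) < \<epsilon>" .
  qed
qed

lemma uclosure_const: "(\<lambda>z. r *\<^sub>R 1) \<in> Ebar"
  using uclosure_scaleR[OF one_in_closure] by simp

lemma uclosure_diff: "u \<in> Ebar \<Longrightarrow> v \<in> Ebar \<Longrightarrow> (\<lambda>z. u z - v z) \<in> Ebar"
  using uclosure_add[of u "\<lambda>z. (-1) *\<^sub>R v z"] uclosure_scaleR[of v "-1"] by simp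

lemma uclosure_zero: "(\<lambda>z. 0) \<in> Ebar"
  using uclosure_const[of 0] by simp

lemma uclosure_sum: "(\<And>i. i \<in> I \<Longrightarrow> f i \<in> Ebar) \<Longrightarrow> (\<lambda>z. \<Sum>i\<in>I. f i z) \<in> Ebar"
proof (induction I rule: infinite_finite_induct)
  case (insert i I)
  then show ?case using uclosure_add[of "f i" "\<lambda>z. \<Sum>i\<in>I. f i z"] by simp
qed (simp_all add: uclosure_zero)

lemma uclosure_power: "u \<in> Ebar \<Longrightarrow> (\<lambda>z. u z ^ n) \<in> Ebar"
proof (induction n)
  case (Suc n)
  then show ?case using uclosure_mult[of u "\<lambda>z. u z ^ n"] by simp
qed (simp add: one_in_closure)

lemma uclosure_uniform_limit:
  assumes P: "\<And>n. P n \<in> Ebar"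
    and lim: "\<And>\<epsilon>. \<epsilon> > 0 \<Longrightarrow> \<forall>\<^sub>F n in sequentially. \<forall>z\<in>topspace X. norm (P n z - u z) < \<epsilon>"
  shows "u \<in> Ebar"
  unfolding uclosure_def CXA_def
proof (intro CollectI conjI allI impI)
  have "continuous_map X Met_TC.mtopology u"
  proof (rule Met_TC.continuous_map_uniform_limit[where F=sequentially and f=P])
    show "\<forall>\<^sub>F n in sequentially. continuous_map X Met_TC.mtopology (P n)"
      using P uclosure_continuous by simp
    fix \<epsilon> :: real assume "\<epsilon> > 0"
    then show "\<forall>\<^sub>F n in sequentially. \<forall>z\<in>topspace X. u z \<in> UNIV \<and> dist (P n z) (u z) < \<epsilon>"
      using lim[of \<epsilon>] by (simp add: dist_norm)
  qed simp
  then show "continuous_map X euclidean u" by simp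
  fix \<epsilon> :: real assume "\<epsilon> > 0"
  then have "\<exists>n. \<forall>z\<in>topspace X. norm (P n z - u z) < \<epsilon>/2"
    using lim[of "\<epsilon>/2"] by (auto simp: eventually_sequentially)
  then obtain n where n: "\<forall>z\<in>topspace X. norm (P n z - u z) < \<epsilon>/2" by blast
  obtain v where v: "v \<in> E" "\<forall>z\<in>topspace X. norm (v z - P n z) < \<epsilon>/2"
    using uclosure_approx[OF P, of "\<epsilon>/2"] \<open>\<epsilon> > 0\<close> by auto
  show "\<exists>v\<in>E. \<forall>z\<in>topspace X. norm (v z - u z) < \<epsilon>"
  proof (intro bexI[OF _ v(1)] ballI)
    fix z assume "z \<in> topspace X"
    then have "norm (v z - u z) < \<epsilon>/2 + \<epsilon>/2" using v(2) n by (intro norm_diff_triangle_less) auto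
    then show "norm (v z - u z) < \<epsilon>" by simp
  qed
qed

lemma uclosure_suminf:
  assumes e: "\<And>n. e n \<in> Ebar" and b: "\<And>n z. z \<in> topspace X \<Longrightarrow> norm (e n z) \<le> c * \<theta>^n"
    and \<theta>: "0 \<le> \<theta>" "\<theta> < 1"
  shows "(\<lambda>z. \<Sum>n. e n z) \<in> Ebar"
proof (rule uclosure_uniform_limit[where P="\<lambda>N z. \<Sum>i<N. e i z"])
  show "(\<lambda>z. \<Sum>i<N. e i z) \<in> Ebar" for N by (rule uclosure_sum) (rule e)
  fix \<epsilon> :: real assume "\<epsilon> > 0"
  have "(\<lambda>N. c * \<theta>^N / (1 - \<theta>)) \<longlonglongrightarrow> 0"
    using \<theta> by (intro tendsto_divide_zero tendsto_mult_right_zero LIMSEQ_power_zero) auto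
  from order_tendstoD(2)[OF this \<open>\<epsilon> > 0\<close>]
  show "\<forall>\<^sub>F N in sequentially. \<forall>z\<in>topspace X. norm ((\<Sum>i<N. e i z) - (\<Sum>n. e n z)) < \<epsilon>"
  proof eventually_elim
    case (elim N)
    show ?case
    proof
      fix z assume "z \<in> topspace X"
      then have "norm ((\<Sum>n. e n z) - (\<Sum>i<N. e i z)) \<le> c * \<theta>^N / (1 - \<theta>)"
        using b \<theta> by (intro norm_suminf_diff_le_geometric)
      then show "norm ((\<Sum>i<N. e i z) - (\<Sum>n. e n z)) < \<epsilon>"
        using elim by (simp add: norm_minus_commute)
    qed
  qed
qed

lemma uclosure_hermitian_part: "v \<in> E \<Longrightarrow> (\<lambda>z. hermitian_part (v z)) \<in> Ebar"
  unfolding hermitian_part_def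
  by (intro uclosure_scaleR[of "\<lambda>z. v z + adj (v z)"] uclosure_add[of v "\<lambda>z. adj (v z)", simplified]
      uclosure_adj E_subset_uclosure)

lemma uclosure_suminf_power:
  assumes "\<rho> \<in> Ebar" and \<theta>: "\<And>z. z \<in> topspace X \<Longrightarrow> norm (\<rho> z) \<le> \<theta>" "0 \<le> \<theta>" "\<theta> < 1"
  shows "(\<lambda>z. \<Sum>n. \<rho> z ^ n) \<in> Ebar"
proof (rule uclosure_suminf[where c=1 and \<theta>=\<theta>])
  show "(\<lambda>z. \<rho> z ^ n) \<in> Ebar" for n by (rule uclosure_power[OF assms(1)])
  show "norm (\<rho> z ^ n) \<le> 1 * \<theta>^n" if "z \<in> topspace X" for n z
    using norm_power_ineq[of "\<rho> z" n] power_mono[OF \<theta>(1)[OF that] norm_ge_zero, of n] by simp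
qed (use \<theta> in auto)

lemma uclosure_inverse_one_add_square:
  assumes d: "d \<in> Ebar" "sa_fun X d" and K: "K > 0"
  obtains q where "q \<in> Ebar"
    "\<And>z. z \<in> topspace X \<Longrightarrow> (1 + K *\<^sub>R (d z * d z)) * q z = 1 \<and> q z * (1 + K *\<^sub>R (d z * d z)) = 1"
proof -
  obtain M where M: "\<forall>z\<in>topspace X. norm (d z) \<le> M" using uclosure_bounded[OF d(1)] by blast
  define S where "S = K * M\<^sup>2 + 1"
  define c where "c = S + 1"
  have S: "S > 0" using K by (simp add: S_def add_nonneg_pos)
  then have c: "c > 0" "S / c < 1" by (simp_all add: c_def)
  \<comment> \<open>\<open>1 + K d\<^sup>2 = c (1 - \<rho>)\<close> with \<open>\<parallel>\<rho>\<parallel> \<le> S/c < 1\<close> uniformly\<close>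
  define \<rho> where "\<rho> z = (1/c) *\<^sub>R (S *\<^sub>R 1 - K *\<^sub>R (d z * d z))" for z
  have \<rho>_le: "norm (\<rho> z) \<le> S / c" if z: "z \<in> topspace X" for z
  proof -
    have "K * (norm (d z))\<^sup>2 \<le> K * M\<^sup>2" using M z K by (intro mult_left_mono power_mono) auto
    then have "K * (norm (d z))\<^sup>2 < S" unfolding S_def by linarith
    then have "norm (S *\<^sub>R 1 - K *\<^sub>R (d z * d z)) \<le> S"
      using d(2) z K by (intro norm_scaleR_one_minus_scaled_square_le) (auto simp: sa_fun_def selfadjoint_def)
    then show ?thesis using c by (simp add: \<rho>_def divide_right_mono)
  qed
  define q where "q z = (1/c) *\<^sub>R (\<Sum>n. \<rho> z ^ n)" for z
  have "\<rho> \<in> Ebar"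
    unfolding \<rho>_def by (intro uclosure_scaleR uclosure_diff uclosure_const uclosure_mult d(1))
  then have "q \<in> Ebar"
    unfolding q_def using \<rho>_le S c by (intro uclosure_scaleR uclosure_suminf_power) auto
  moreover have "(1 + K *\<^sub>R (d z * d z)) * q z = 1 \<and> q z * (1 + K *\<^sub>R (d z * d z)) = 1"
    if z: "z \<in> topspace X" for z
  proof -
    have "norm (\<rho> z) < 1" using \<rho>_le[OF z] c by linarith
    note N = geometric_series_inverse[OF this]
    have "c *\<^sub>R (1 - \<rho> z) = c *\<^sub>R 1 - (S *\<^sub>R 1 - K *\<^sub>R (d z * d z))"
      using c by (simp add: \<rho>_def scaleR_right_diff_distrib)
    also have "\<dots> = 1 + K *\<^sub>R (d z * d z)" by (simp add: c_def algebra_simps)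
    finally have "1 + K *\<^sub>R (d z * d z) = c *\<^sub>R (1 - \<rho> z)" ..
    then show ?thesis using c N(2,3) by (simp add: q_def)
  qed
  ultimately show ?thesis by (rule that)
qed

text \<open>Damping \<open>d\<close> to \<open>d (1 + K d\<^sup>2)\<^sup>-\<^sup>1\<close> keeps it within \<open>K\<parallel>d\<parallel>\<^sup>3\<close> of \<open>d\<close> at \<open>x\<close> but bounds it
  by \<open>1/(2\<surd>K)\<close> everywhere.\<close>
lemma damping_step:
  assumes d: "d \<in> Ebar" "sa_fun X d" and x: "x \<in> topspace X" and r: "norm (d x) > 0"
  shows "\<exists>e\<in>Ebar. sa_fun X e \<and> (\<forall>z\<in>topspace X. norm (e z) \<le> norm (d x))
    \<and> norm (e x - d x) \<le> norm (d x) / 4"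
proof -
  define r where "r = norm (d x)"
  define K where "K = (1 / (2 * r))\<^sup>2"
  have "r > 0" using r by (simp add: r_def)
  then have "sqrt K = 1 / (2 * r)" by (simp add: K_def real_sqrt_abs)
  then have K: "K > 0" "1 / (2 * sqrt K) = r" using \<open>r > 0\<close> by (simp_all add: K_def)
  obtain q where q: "q \<in> Ebar"
    "\<And>z. z \<in> topspace X \<Longrightarrow> (1 + K *\<^sub>R (d z * d z)) * q z = 1 \<and> q z * (1 + K *\<^sub>R (d z * d z)) = 1"
    using uclosure_inverse_one_add_square[OF d K(1)] by blast
  have sa: "adj (d z) = d z" if "z \<in> topspace X" for z
    using d(2) that by (simp add: sa_fun_def selfadjoint_def)
  define e where "e z = d z * q z" for z
  have "e \<in> Ebar" unfolding e_def by (rule uclosure_mult[OF d(1) q(1)])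
  moreover have "sa_fun X e"
    using adj_mult_inverse_one_add_square(3)[OF sa q(2)[THEN conjunct1] q(2)[THEN conjunct2]]
    by (simp add: sa_fun_def selfadjoint_def e_def)
  moreover have e_le: "norm (e z) \<le> r" if "z \<in> topspace X" for z
    using norm_mult_inverse_one_add_square_le[OF sa[OF that] K(1) q(2)[OF that, THEN conjunct1]
        q(2)[OF that, THEN conjunct2]] K(2) by (simp add: e_def)
  moreover have "norm (e x - d x) \<le> r / 4"
  proof -
    have "q x + K *\<^sub>R (d x * d x * q x) = 1" using q(2)[OF x] by (simp add: algebra_simps)
    then have "q x - 1 = - K *\<^sub>R (d x * d x * q x)" by (simp add: algebra_simps)
    have "e x - d x = d x * (q x - 1)" by (simp add: e_def right_diff_distrib)
    also have "\<dots> = - K *\<^sub>R (d x * d x * e x)" using \<open>q x - 1 = _\<close> by (simp add: e_def mult.assoc)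
    finally have "norm (e x - d x) = K * norm (d x * d x * e x)" using K(1) by simp
    also have "\<dots> \<le> K * (norm (d x) * norm (d x) * norm (e x))"
      using K(1) by (intro mult_left_mono order_trans[OF norm_mult_ineq] mult_right_mono norm_mult_ineq) auto
    also have "\<dots> \<le> K * (r * r * r)"
      using e_le[OF x] K(1) by (intro mult_left_mono) (auto simp: r_def intro: mult_left_mono)
    also have "\<dots> = r / 4" using \<open>r > 0\<close> by (simp add: K_def power2_eq_square)
    finally show ?thesis .
  qed
  ultimately show ?thesis by (auto simp: r_def)
qed

section \<open>Interpolation at a point\<close>

definition approximable_at :: "'x \<Rightarrow> 'a \<Rightarrow> bool" where
  "approximable_at x b \<longleftrightarrow> adj b = b \<and> (\<forall>\<epsilon>>0. \<exists>w\<in>E. norm (w x - b) < \<epsilon>)"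

lemma approximable_atD: "approximable_at x b \<Longrightarrow> \<epsilon> > 0 \<Longrightarrow> \<exists>w\<in>E. norm (w x - b) < \<epsilon>"
  by (simp add: approximable_at_def)

lemma approximable_at_diff:
  assumes "approximable_at x b" "e \<in> Ebar" "sa_fun X e" "x \<in> topspace X"
  shows "approximable_at x (b - e x)"
  unfolding approximable_at_def
proof (intro conjI allI impI)
  show "adj (b - e x) = b - e x"
    using assms by (simp add: approximable_at_def adj_diff sa_fun_def selfadjoint_def)
  fix \<epsilon> :: real assume "\<epsilon> > 0"
  then obtain w v where w: "w \<in> E" "norm (w x - b) < \<epsilon>/2"
    and v: "v \<in> E" "\<forall>z\<in>topspace X. norm (v z - e z) < \<epsilon>/2"
    using approximable_atD[OF assms(1), of "\<epsilon>/2"] uclosure_approx[OF assms(2), of "\<epsilon>/2"] by auto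
  have "(w x - v x) - (b - e x) = (w x - b) - (v x - e x)" by simp
  then have "norm ((w x - v x) - (b - e x)) \<le> norm (w x - b) + norm (v x - e x)"
    by (metis norm_triangle_ineq4)
  then show "\<exists>w\<in>E. norm (w x - (b - e x)) < \<epsilon>"
    using w v assms(4) by (intro bexI[OF _ E_diff[OF w(1) v(1)]]) fastforce
qed

text \<open>Approximate \<open>b\<close> at \<open>x\<close> by an element of \<open>E\<close>, take its hermitian part and damp it.\<close>
lemma halving_step:
  assumes x: "x \<in> topspace X" and b: "approximable_at x b"
  shows "\<exists>e\<in>Ebar. sa_fun X e \<and> (\<forall>z\<in>topspace X. norm (e z) \<le> 2 * norm b) \<and> norm (b - e x) \<le> norm b / 2"
proof (cases "b = 0")
  case True
  then show ?thesis using uclosure_zero by (intro bexI[of _ "\<lambda>z. 0"]) (auto simp: sa_fun_def selfadjoint_def)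
next
  case False
  then obtain w where w: "w \<in> E" "norm (w x - b) < norm b / 8"
    using approximable_atD[OF b, of "norm b / 8"] by auto
  define d where "d z = hermitian_part (w z)" for z
  have d: "d \<in> Ebar" "sa_fun X d"
    using uclosure_hermitian_part[OF w(1)] by (simp_all add: d_def[abs_def] sa_fun_def selfadjoint_def)
  have db: "norm (d x - b) < norm b / 8"
    using norm_hermitian_part_diff_le[of b "w x"] b w(2) by (auto simp: d_def approximable_at_def)
  then have r: "norm b - norm b / 8 \<le> norm (d x)" "norm (d x) \<le> norm b + norm b / 8"
    using norm_triangle_ineq2[of b "d x"] norm_triangle_ineq2[of "d x" b] by (simp_all add: norm_minus_commute)
  moreover have "norm b > 0" using False by simp
  ultimately have "norm (d x) > 0" by linarith
  then obtain e where e: "e \<in> Ebar" "sa_fun X e" "\<forall>z\<in>topspace X. norm (e z) \<le> norm (d x)"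
    "norm (e x - d x) \<le> norm (d x) / 4"
    using damping_step[OF d x] by blast
  have "b - e x = (b - d x) - (e x - d x)" by simp
  then have "norm (b - e x) \<le> norm (b - d x) + norm (e x - d x)" by (metis norm_triangle_ineq4)
  then have "norm (b - e x) \<le> norm b / 2" using db r e(4) norm_minus_commute[of b "d x"] by linarith
  moreover have "\<forall>z\<in>topspace X. norm (e z) \<le> 2 * norm b"
  proof
    fix z assume "z \<in> topspace X"
    then have "norm (e z) \<le> norm (d x)" using e(3) by blast
    then show "norm (e z) \<le> 2 * norm b" using r(2) \<open>norm b > 0\<close> by linarith
  qed
  ultimately show ?thesis using e(1,2) by blast
qed

lemma halving_sequence:
  assumes x: "x \<in> topspace X" and b: "approximable_at x b"
  obtains e where "\<And>n. e n \<in> Ebar" "\<And>n. sa_fun X (e n)"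
    "\<And>n z. z \<in> topspace X \<Longrightarrow> norm (e n z) \<le> 2 * norm b * (1/2)^n" "(\<lambda>n. e n x) sums b"
proof -
  obtain F where F: "\<And>c. approximable_at x c \<Longrightarrow> F c \<in> Ebar \<and> sa_fun X (F c)
      \<and> (\<forall>z\<in>topspace X. norm (F c z) \<le> 2 * norm c) \<and> norm (c - F c x) \<le> norm c / 2"
    using halving_step[OF x] by metis
  define r where "r n = ((\<lambda>c. c - F c x) ^^ n) b" for n
  have r_Suc: "r (Suc n) = r n - F (r n) x" for n by (simp add: r_def)
  have r: "approximable_at x (r n) \<and> norm (r n) \<le> norm b * (1/2)^n" for n
  proof (induction n)
    case 0
    then show ?case using b by (simp add: r_def)
  next
    case (Suc n)
    then show ?case
      using F[of "r n"] approximable_at_diff[of x "r n" "F (r n)"] x by (simp add: r_Suc)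
  qed
  show ?thesis
  proof
    show "F (r n) \<in> Ebar" "sa_fun X (F (r n))" for n using F r by blast+
    show "norm (F (r n) z) \<le> 2 * norm b * (1/2)^n" if "z \<in> topspace X" for n z
      using F[of "r n"] r[of n] that by fastforce
    have "r \<longlonglongrightarrow> 0"
    proof (rule tendsto_norm_zero_cancel, rule Lim_null_comparison)
      show "\<forall>\<^sub>F n in sequentially. norm (norm (r n)) \<le> norm b * (1/2)^n" using r by simp
      show "(\<lambda>n. norm b * (1/2::real)^n) \<longlonglongrightarrow> 0" by (intro tendsto_mult_right_zero LIMSEQ_power_zero) simp
    qed
    from telescope_sums'[OF this] show "(\<lambda>n. F (r n) x) sums b" by (simp add: r_Suc r_def)
  qed
qed

lemma approximable_at_value_of_uclosure:
  assumes x: "x \<in> topspace X" and b: "approximable_at x b"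
  shows "\<exists>u\<in>Ebar. sa_fun X u \<and> u x = b \<and> (\<forall>z\<in>topspace X. norm (u z) \<le> 4 * norm b)"
proof -
  obtain e where e: "\<And>n. e n \<in> Ebar" "\<And>n. sa_fun X (e n)"
    "\<And>n z. z \<in> topspace X \<Longrightarrow> norm (e n z) \<le> 2 * norm b * (1/2)^n" "(\<lambda>n. e n x) sums b"
    using halving_sequence[OF x b] by blast
  define u where "u z = (\<Sum>n. e n z)" for z
  have "u \<in> Ebar" unfolding u_def[abs_def] by (rule uclosure_suminf[where \<theta>="1/2"]) (use e in auto)
  moreover have "sa_fun X u" unfolding sa_fun_def selfadjoint_def
  proof
    fix z assume z: "z \<in> topspace X"
    have "summable (\<lambda>n. e n z)" by (rule summable_if_norm_le_geometric[where \<theta>="1/2"]) (use e(3) z in auto)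
    then have "adj (u z) = (\<Sum>n. adj (e n z))" unfolding u_def by (rule bounded_linear.suminf[OF bounded_linear_adj])
    also have "\<dots> = u z" using e(2) z by (simp add: u_def sa_fun_def selfadjoint_def)
    finally show "adj (u z) = u z" .
  qed
  moreover have "u x = b" unfolding u_def using e(4) by (rule sums_unique[symmetric])
  moreover have "norm (u z) \<le> 4 * norm b" if z: "z \<in> topspace X" for z
  proof -
    have "norm (u z) \<le> (\<Sum>n. 2 * norm b * (1/2)^n)" unfolding u_def
      by (rule norm_suminf_le) (use e(3) z in auto)
    also have "\<dots> = 4 * norm b" by (simp add: suminf_mult suminf_geometric)
    finally show ?thesis .
  qed
  ultimately show ?thesis by blast
qed

lemma Delta2_approxE:
  assumes "f \<in> Delta2 X E" "x \<in> topspace X" "y \<in> topspace X" "\<epsilon> > 0"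
  obtains v where "v \<in> E" "norm (v x - f x) < \<epsilon>" "norm (v y - f y) < \<epsilon>"
proof -
  have "\<forall>x\<in>topspace X. \<forall>y\<in>topspace X. \<forall>\<epsilon>>0. \<exists>v\<in>E. norm (v x - f x) < \<epsilon> \<and> norm (v y - f y) < \<epsilon>"
    using assms(1) by (simp add: Delta2_def)
  then show ?thesis using assms(2-4) that by blast
qed

lemma approximable_at_Delta2:
  assumes f: "f \<in> Delta2 X E" "sa_fun X f" and x: "x \<in> topspace X"
  shows "approximable_at x (f x)"
  unfolding approximable_at_def
proof (intro conjI allI impI)
  show "adj (f x) = f x" using f(2) x by (simp add: sa_fun_def selfadjoint_def)
  show "\<exists>w\<in>E. norm (w x - f x) < \<epsilon>" if "\<epsilon> > 0" for \<epsilon>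
    using Delta2_approxE[OF f(1) x x that] by blast
qed

lemma local_interpolant:
  assumes f: "f \<in> Delta2 X E" "sa_fun X f" and x: "x \<in> topspace X" and y: "y \<in> topspace X"
    and \<eta>: "\<eta> > 0"
  shows "\<exists>W\<in>Ebar. sa_fun X W \<and> W x = f x \<and> norm (W y - f y) < \<eta>"
proof -
  have fsa: "adj (f z) = f z" if "z \<in> topspace X" for z
    using f(2) that by (simp add: sa_fun_def selfadjoint_def)
  have "\<eta>/5 > 0" using \<eta> by simp
  then obtain v where v: "v \<in> E" "norm (v x - f x) < \<eta>/5" "norm (v y - f y) < \<eta>/5"
    using Delta2_approxE[OF f(1) x y] by blast
  define d where "d z = hermitian_part (v z)" for z
  have d: "d \<in> Ebar" "sa_fun X d"
    using uclosure_hermitian_part[OF v(1)] by (simp_all add: d_def[abs_def] sa_fun_def selfadjoint_def)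
  have dx: "norm (f x - d x) < \<eta>/5"
    using norm_hermitian_part_diff_le[OF fsa[OF x], of "v x"] v(2) by (simp add: d_def norm_minus_commute)
  have dy: "norm (d y - f y) < \<eta>/5"
    using norm_hermitian_part_diff_le[OF fsa[OF y], of "v y"] v(3) by (simp add: d_def)
  obtain e where e: "e \<in> Ebar" "sa_fun X e" "e x = f x - d x"
    "\<forall>z\<in>topspace X. norm (e z) \<le> 4 * norm (f x - d x)"
    using approximable_at_value_of_uclosure[OF x approximable_at_diff[OF approximable_at_Delta2[OF f x] d x]]
    by blast
  define W where "W z = d z + e z" for z
  have "W \<in> Ebar" unfolding W_def[abs_def] by (rule uclosure_add[OF d(1) e(1)])
  moreover have "sa_fun X W" using d(2) e(2) by (simp add: W_def sa_fun_def selfadjoint_def adj_add)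
  moreover have "W x = f x" by (simp add: W_def e(3))
  moreover have "norm (W y - f y) < \<eta>"
  proof -
    have "W y - f y = (d y - f y) + e y" by (simp add: W_def)
    then have "norm (W y - f y) \<le> norm (d y - f y) + norm (e y)" by (metis norm_triangle_ineq)
    moreover have "norm (e y) \<le> 4 * norm (f x - d x)" using e(4) y by blast
    ultimately show ?thesis using dx dy by linarith
  qed
  ultimately show ?thesis by blast
qed

lemma finite_interpolant_cover:
  assumes f: "f \<in> Delta2 X E" "sa_fun X f" and x: "x \<in> topspace X" and \<eta>: "\<eta> > 0"
  shows "\<exists>(Y :: 'x set) W. finite Y \<and> (\<forall>y\<in>Y. W y \<in> Ebar \<and> sa_fun X (W y) \<and> W y x = f x)
    \<and> (\<forall>z\<in>topspace X. \<exists>y\<in>Y. norm (W y z - f z) < \<eta>)"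
proof -
  have "\<forall>y\<in>topspace X. \<exists>W. W \<in> Ebar \<and> sa_fun X W \<and> W x = f x \<and> norm (W y - f y) < \<eta>"
    using local_interpolant[OF f x _ \<eta>] by blast
  then obtain W where W: "\<forall>y\<in>topspace X.
      W y \<in> Ebar \<and> sa_fun X (W y) \<and> W y x = f x \<and> norm (W y y - f y) < \<eta>"
    by (metis bchoice)
  define V where "V y = {z \<in> topspace X. norm (W y z - f z) \<in> {..<\<eta>}}" for y
  have "openin X (V y)" if "y \<in> topspace X" for y
  proof -
    have "continuous_map X euclidean f" using f(1) by (simp add: Delta2_def CXA_def)
    then have "continuous_map X euclideanreal (\<lambda>z. norm (W y z - f z))"
      using W that uclosure_continuous by (intro continuous_map_norm continuous_map_diff) auto
    then show ?thesis unfolding V_def by (rule openin_continuous_map_preimage) simp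
  qed
  moreover have "topspace X \<subseteq> \<Union>(V ` topspace X)" using W by (fastforce simp: V_def)
  moreover have "compactin X (topspace X)" using compact by (simp add: compact_space_def)
  ultimately obtain \<V> where "finite \<V>" "\<V> \<subseteq> V ` topspace X" "topspace X \<subseteq> \<Union>\<V>"
    unfolding compactin_def by (metis (no_types, lifting) imageE)
  then obtain Y where Y: "finite Y" "Y \<subseteq> topspace X" "topspace X \<subseteq> \<Union>(V ` Y)"
    using finite_subset_image by metis
  have "\<forall>y\<in>Y. W y \<in> Ebar \<and> sa_fun X (W y) \<and> W y x = f x" using W Y(2) by blast
  moreover have "\<forall>z\<in>topspace X. \<exists>y\<in>Y. norm (W y z - f z) < \<eta>" using Y(3) by (auto simp: V_def)
  ultimately show ?thesis using Y(1) by (intro exI[of _ Y] exI[of _ W] conjI)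
qed

lemma sandwich_from_cover:
  assumes u: "u \<in> Ebar" "sa_fun X u" and f: "sa_fun X f" and \<delta>: "\<delta> > 0" and Y: "finite Y"
    and W: "\<And>y. y \<in> Y \<Longrightarrow> W y \<in> Ebar \<and> sa_fun X (W y) \<and> W y x = u x"
    and cover: "\<And>z. z \<in> topspace X \<Longrightarrow> \<exists>y\<in>Y. norm (W y z - f z) \<le> 3/4 * \<delta>"
  shows "\<exists>g h. g \<in> Ebar \<and> h \<in> Ebar \<and> sa_fun X g \<and> sa_fun X h \<and> g x = u x \<and> h x = u x
    \<and> fun_le X (\<lambda>z. g z - \<delta> *\<^sub>R 1) f \<and> fun_le X f (\<lambda>z. h z + \<delta> *\<^sub>R 1)"
proof -
  have sa: "adj (u z) = u z" "adj (f z) = f z" "y \<in> Y \<Longrightarrow> adj (W y z) = W y z" if "z \<in> topspace X" for z y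
    using u(2) f W that by (auto simp: sa_fun_def selfadjoint_def)
  define Q where "Q z = (\<Sum>y\<in>Y. (W y z - u z) * (W y z - u z))" for z
  define g where "g z = u z - (1/\<delta>) *\<^sub>R Q z" for z
  define h where "h z = u z + (1/\<delta>) *\<^sub>R Q z" for z
  have "Q \<in> Ebar" unfolding Q_def[abs_def] using W u(1) by (intro uclosure_sum uclosure_mult uclosure_diff) auto
  then have "g \<in> Ebar" "h \<in> Ebar"
    using uclosure_diff[OF u(1) uclosure_scaleR] uclosure_add[OF u(1) uclosure_scaleR]
    by (simp_all add: g_def[abs_def] h_def[abs_def])
  moreover have "adj (Q z) = Q z" if "z \<in> topspace X" for z
    unfolding Q_def adj_sum using sa[OF that] by (intro sum.cong refl) (simp add: adj_mult adj_diff)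
  then have "sa_fun X g" "sa_fun X h"
    using sa by (simp_all add: g_def h_def sa_fun_def selfadjoint_def adj_diff adj_add adj_scaleR)
  moreover have "Q x = 0" using W by (simp add: Q_def)
  then have "g x = u x" "h x = u x" by (simp_all add: g_def h_def)
  moreover have "nonneg (h z + \<delta> *\<^sub>R 1 - f z) \<and> nonneg (f z - (g z - \<delta> *\<^sub>R 1))"
    if z: "z \<in> topspace X" for z
  proof -
    obtain y where y: "y \<in> Y" "norm ((f z - u z) - (W y z - u z)) \<le> 3/4 * \<delta>"
      using cover z by (fastforce simp: norm_minus_commute)
    have "adj (f z - u z) = f z - u z" "\<And>y. y \<in> Y \<Longrightarrow> adj (W y z - u z) = W y z - u z"
      using sa[OF z] by (simp_all add: adj_diff)
    note Q = nonneg_by_norm_sum_squares_diff[where w="\<lambda>y. W y z - u z", OF \<delta> Y y(1) this y(2)]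
      nonneg_by_norm_sum_squares_add[where w="\<lambda>y. W y z - u z", OF \<delta> Y y(1) this y(2)]
    then show ?thesis
      unfolding Q_def[symmetric] by (auto simp: g_def h_def algebra_simps intro: nonneg_by_norm_imp_nonneg)
  qed
  then have "fun_le X f (\<lambda>z. h z + \<delta> *\<^sub>R 1)" "fun_le X (\<lambda>z. g z - \<delta> *\<^sub>R 1) f"
    by (simp_all add: fun_le_def)
  ultimately show ?thesis by blast
qed

end

theorem lemma2p6:
  fixes X :: "'x topology" and E :: "('x \<Rightarrow> 'a::cstar_algebra_1) set"
    and x :: 'x and \<delta> :: real and f :: "'x \<Rightarrow> 'a"
  assumes "compact_space X" and "Hausdorff_space X"
    and "star_subalgebra X E"
    and "(\<lambda>z. 1) \<in> uclosure X E"
    and "x \<in> topspace X" and "\<delta> > 0"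
    and "f \<in> Delta2 X E" and "sa_fun X f"
  shows "\<exists>g h. g \<in> uclosure X E \<and> h \<in> uclosure X E \<and> sa_fun X g \<and> sa_fun X h \<and>
           g x = f x \<and> f x = h x \<and>
           fun_le X (\<lambda>z. g z - \<delta> *\<^sub>R 1) f \<and> fun_le X f (\<lambda>z. h z + \<delta> *\<^sub>R 1)"
proof -
  interpret unital_star_subalgebra X E using assms(1,3,4) by unfold_locales
  obtain u where u: "u \<in> Ebar" "sa_fun X u" "u x = f x"
    using approximable_at_value_of_uclosure[OF assms(5) approximable_at_Delta2[OF assms(7,8,5)]] by blast
  have "3/4 * \<delta> > 0" using assms(6) by simp
  obtain Y :: "'x set" and W where Y: "finite Y" and W: "\<forall>y\<in>Y. W y \<in> Ebar \<and> sa_fun X (W y) \<and> W y x = f x"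
    and cover: "\<forall>z\<in>topspace X. \<exists>y\<in>Y. norm (W y z - f z) < 3/4 * \<delta>"
    using finite_interpolant_cover[OF assms(7,8,5) \<open>3/4 * \<delta> > 0\<close>] by blast
  have W': "W y \<in> Ebar \<and> sa_fun X (W y) \<and> W y x = u x" if "y \<in> Y" for y
    using W that unfolding u(3) by blast
  have cover': "\<exists>y\<in>Y. norm (W y z - f z) \<le> 3/4 * \<delta>" if "z \<in> topspace X" for z
    using bspec[OF cover that] by (auto dest: less_imp_le)
  obtain g h where "g \<in> Ebar" "h \<in> Ebar" "sa_fun X g" "sa_fun X h" "g x = u x" "h x = u x"
    "fun_le X (\<lambda>z. g z - \<delta> *\<^sub>R 1) f" "fun_le X f (\<lambda>z. h z + \<delta> *\<^sub>R 1)"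
    using sandwich_from_cover[OF u(1,2) assms(8,6) Y W' cover'] by blast
  then show ?thesis using u(3) by (intro exI[of _ g] exI[of _ h]) simp
qed

end
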